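(* Let $M(n)$ denote the maximum modulus of an independence root over all finite simple graphs on $n$ vertices. Then $$\frac{\log_3(M(n))}{n}=\frac{1}{3}+o(1)\quad\text{as } n\to\infty.$$
   Context: For a finite simple graph $G$, the independence polynomial is $i(G,x)=\sum_{k\ge 0} i_k x^k$, where $i_k$ is the number of independent sets of size $k$ in $G$; its complex roots are the independence roots of $G$. *)

theory Defs
  imports "HOL-Analysis.Analysis" "HOL-Computational_Algebra.Polynomial"
begin

definition simple_graph_on :: "nat \<Rightarrow> (nat \<Rightarrow> nat \<Rightarrow> bool) \<Rightarrow> bool" where
  "simple_graph_on n E \<longleftrightarrow>
     (\<forall>x y. E x y \<longrightarrow> x < n \<and> y < n) \<and>
     (\<forall>x y. E x y \<longrightarrow> E y x) \<and>
     (\<forall>x. \<not> E x x)"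

definition independent_set :: "nat \<Rightarrow> (nat \<Rightarrow> nat \<Rightarrow> bool) \<Rightarrow> nat set \<Rightarrow> bool" where
  "independent_set n E S \<longleftrightarrow> S \<subseteq> {..<n} \<and> (\<forall>x\<in>S. \<forall>y\<in>S. \<not> E x y)"

definition indep_poly :: "nat \<Rightarrow> (nat \<Rightarrow> nat \<Rightarrow> bool) \<Rightarrow> complex poly" where
  "indep_poly n E =
     (\<Sum>k\<le>n. monom (of_nat (card {S. independent_set n E S \<and> card S = k})) k)"

definition max_indep_root_modulus :: "nat \<Rightarrow> real" where
  "max_indep_root_modulus n =
     Max {cmod z | z E. simple_graph_on n E \<and> poly (indep_poly n E) z = 0}"

end

theory Submission
  imports Defs "HOL-Real_Asymp.Real_Asymp"
begin

text \<open>Upper bound: an independent set of size \<open>j\<close> lies in one of the \<open>K\<close> maximal independent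
  sets, so \<open>i\<^sub>j \<le> K (d choose j)\<close> for the independence number \<open>d\<close>. As \<open>i\<^sub>d \<ge> 1\<close>, a
  Fujiwara-type estimate bounds every root by \<open>2 K n\<close>, and \<open>K \<le> 3 powr (n / 3)\<close> by Moon--Moser.
  Lower bound: \<open>m = (n - 1) div 3\<close> triangles, a hub joined to two vertices of each, and isolated
  vertices give \<open>(1 + x)\<^sup>r ((1 + 3x)\<^sup>m + x (1 + x)\<^sup>m)\<close>, which by the intermediate value theorem
  has a real root below \<open>-3\<^sup>m\<close>.\<close>

definition indep_sets :: "('a \<Rightarrow> 'a \<Rightarrow> bool) \<Rightarrow> 'a set \<Rightarrow> 'a set set" where
  "indep_sets E V = {S. S \<subseteq> V \<and> (\<forall>x\<in>S. \<forall>y\<in>S. \<not> E x y)}"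

definition indep_sum :: "('a \<Rightarrow> 'a \<Rightarrow> bool) \<Rightarrow> 'a set \<Rightarrow> 'b::comm_ring_1 \<Rightarrow> 'b" where
  "indep_sum E V z = (\<Sum>S\<in>indep_sets E V. z ^ card S)"

definition closed_nbhd :: "('a \<Rightarrow> 'a \<Rightarrow> bool) \<Rightarrow> 'a \<Rightarrow> 'a set" where
  "closed_nbhd E v = insert v {w. E v w}"

lemma finite_indep_sets: "finite V \<Longrightarrow> finite (indep_sets E V)"
  by (rule finite_subset[of _ "Pow V"]) (auto simp: indep_sets_def)

lemma indep_sets_delete_vertex:
  assumes "symp E" "v \<in> V" "\<not> E v v"
  shows "indep_sets E V =
    indep_sets E (V - {v}) \<union> insert v ` indep_sets E (V - closed_nbhd E v)"
proof (intro equalityI subsetI)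
  fix S assume S: "S \<in> indep_sets E V"
  show "S \<in> indep_sets E (V - {v}) \<union> insert v ` indep_sets E (V - closed_nbhd E v)"
  proof (cases "v \<in> S")
    case True
    then have "S - {v} \<in> indep_sets E (V - closed_nbhd E v)" and "S = insert v (S - {v})"
      using S by (auto simp: indep_sets_def closed_nbhd_def)
    then show ?thesis by blast
  qed (use S in \<open>auto simp: indep_sets_def\<close>)
qed (use assms in \<open>auto simp: indep_sets_def closed_nbhd_def dest: sympD\<close>)

lemma indep_sum_delete_vertex:
  assumes "finite V" "symp E" "v \<in> V" "\<not> E v v"
  shows "indep_sum E V z = indep_sum E (V - {v}) z + z * indep_sum E (V - closed_nbhd E v) z"
proof -
  let ?A = "indep_sets E (V - {v})" and ?B = "indep_sets E (V - closed_nbhd E v)"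
  have fin: "finite ?A" "finite ?B"
    using assms(1) by (auto intro: finite_indep_sets)
  have disj: "?A \<inter> insert v ` ?B = {}" and inj: "inj_on (insert v) ?B"
    by (auto simp: indep_sets_def closed_nbhd_def inj_on_def)
  have card_insert: "card (insert v S) = Suc (card S)" if "S \<in> ?B" for S
  proof -
    have "finite S" "v \<notin> S"
      using that assms(1) by (auto simp: indep_sets_def closed_nbhd_def intro: finite_subset)
    then show ?thesis by simp
  qed
  have "indep_sum E V z = (\<Sum>S\<in>?A. z ^ card S) + (\<Sum>S\<in>insert v ` ?B. z ^ card S)"
    unfolding indep_sum_def indep_sets_delete_vertex[OF assms(2-4)]
    using fin disj by (intro sum.union_disjoint) auto
  also have "(\<Sum>S\<in>insert v ` ?B. z ^ card S) = (\<Sum>S\<in>?B. z * z ^ card S)"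
    using card_insert by (simp add: sum.reindex[OF inj])
  finally show ?thesis
    by (simp add: indep_sum_def sum_distrib_left)
qed

lemma indep_sets_Un:
  assumes "A \<inter> B = {}" "\<forall>x\<in>A. \<forall>y\<in>B. \<not> E x y \<and> \<not> E y x"
  shows "indep_sets E (A \<union> B) = (\<lambda>(S, T). S \<union> T) ` (indep_sets E A \<times> indep_sets E B)"
proof (intro equalityI subsetI)
  fix U assume "U \<in> indep_sets E (A \<union> B)"
  then have "(U \<inter> A, U \<inter> B) \<in> indep_sets E A \<times> indep_sets E B" "U = U \<inter> A \<union> U \<inter> B"
    by (auto simp: indep_sets_def)
  then show "U \<in> (\<lambda>(S, T). S \<union> T) ` (indep_sets E A \<times> indep_sets E B)"
    by (metis (no_types, lifting) case_prod_conv image_eqI)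
qed (use assms in \<open>auto simp: indep_sets_def; blast\<close>)

lemma indep_sum_Un:
  assumes "finite A" "finite B" "A \<inter> B = {}" "\<forall>x\<in>A. \<forall>y\<in>B. \<not> E x y \<and> \<not> E y x"
  shows "indep_sum E (A \<union> B) z = indep_sum E A z * indep_sum E B z"
proof -
  let ?P = "indep_sets E A \<times> indep_sets E B"
  have inj: "inj_on (\<lambda>(S, T). S \<union> T) ?P"
  proof (rule inj_on_inverseI[where g = "\<lambda>U. (U \<inter> A, U \<inter> B)"])
    fix p assume "p \<in> ?P"
    then show "(\<lambda>U. (U \<inter> A, U \<inter> B)) (case p of (S, T) \<Rightarrow> S \<union> T) = p"
      using assms(3) by (cases p) (auto simp: indep_sets_def)
  qed
  have "card (S \<union> T) = card S + card T" if "(S, T) \<in> ?P" for S T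
    using that assms by (intro card_Un_disjoint) (auto simp: indep_sets_def intro: finite_subset)
  then have "indep_sum E (A \<union> B) z = (\<Sum>(S, T)\<in>?P. z ^ card S * z ^ card T)"
    unfolding indep_sum_def indep_sets_Un[OF assms(3,4)] sum.reindex[OF inj]
    by (intro sum.cong) (auto simp: power_add)
  also have "\<dots> = indep_sum E A z * indep_sum E B z"
    by (simp add: indep_sum_def sum_product sum.cartesian_product)
  finally show ?thesis .
qed

lemma indep_sum_UN:
  assumes "finite I" "\<And>i. i \<in> I \<Longrightarrow> finite (A i)" "disjoint_family_on A I"
    and "\<And>i j x y. i \<in> I \<Longrightarrow> j \<in> I \<Longrightarrow> i \<noteq> j \<Longrightarrow> x \<in> A i \<Longrightarrow> y \<in> A j \<Longrightarrow> \<not> E x y"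
  shows "indep_sum E (\<Union>i\<in>I. A i) z = (\<Prod>i\<in>I. indep_sum E (A i) z)"
  using assms
proof (induction I rule: finite_induct)
  case empty
  have "indep_sets E {} = {{}}"
    by (auto simp: indep_sets_def)
  then show ?case
    by (simp add: indep_sum_def)
next
  case (insert i I)
  have "indep_sum E (A i \<union> (\<Union>j\<in>I. A j)) z = indep_sum E (A i) z * indep_sum E (\<Union>j\<in>I. A j) z"
  proof (rule indep_sum_Un)
    show "A i \<inter> (\<Union>j\<in>I. A j) = {}"
      using insert.prems(2) insert.hyps(2) by (fastforce simp: disjoint_family_on_def)
    show "\<forall>x\<in>A i. \<forall>y\<in>\<Union>j\<in>I. A j. \<not> E x y \<and> \<not> E y x"
      using insert.prems(3) insert.hyps(2) by blast
  qed (use insert.hyps(1) insert.prems(1) in simp_all)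
  also have "indep_sum E (\<Union>j\<in>I. A j) z = (\<Prod>j\<in>I. indep_sum E (A j) z)"
  proof (rule insert.IH)
    show "disjoint_family_on A I"
      using insert.prems(2) by (simp add: disjoint_family_on_def)
  qed (use insert.prems(1,3) in \<open>simp, meson insertCI\<close>)
  finally show ?case
    using insert.hyps by simp
qed

lemma indep_sum_edgeless:
  assumes "finite V" "\<forall>x\<in>V. \<forall>y\<in>V. \<not> E x y"
  shows "indep_sum E V z = (1 + z) ^ card V"
proof -
  have "indep_sets E V = Pow V"
    using assms(2) by (auto simp: indep_sets_def)
  then have "indep_sum E V z = (\<Sum>S\<in>Pow V. prod (\<lambda>_. z) S * prod (\<lambda>_. 1) (V - S))"
    by (simp add: indep_sum_def)
  also have "\<dots> = (\<Prod>x\<in>V. z + 1)"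
    by (rule prod_add[symmetric, OF assms(1)])
  finally show ?thesis
    by (simp add: add.commute)
qed

lemma indep_sum_triangle:
  assumes "irreflp E" "E a b" "E a c" "E b c"
  shows "indep_sum E {a, b, c} z = 1 + 3 * z"
proof -
  have dist: "a \<noteq> b" "a \<noteq> c" "b \<noteq> c"
    using assms irreflpD by metis+
  have "S \<in> {{}, {a}, {b}, {c}}" if "S \<in> indep_sets E {a, b, c}" for S
  proof -
    have "S \<subseteq> {a, b, c}" "\<not> (a \<in> S \<and> b \<in> S)" "\<not> (a \<in> S \<and> c \<in> S)" "\<not> (b \<in> S \<and> c \<in> S)"
      using that assms(2-4) by (auto simp: indep_sets_def)
    then show ?thesis
      by blast
  qed
  moreover have "{{}, {a}, {b}, {c}} \<subseteq> indep_sets E {a, b, c}"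
    using irreflpD[OF assms(1)] by (auto simp: indep_sets_def)
  ultimately have "indep_sets E {a, b, c} = {{}, {a}, {b}, {c}}"
    by blast
  then show ?thesis
    using dist by (simp add: indep_sum_def)
qed

lemma indep_sum_by_card:
  assumes "finite V" "\<And>S. S \<in> indep_sets E V \<Longrightarrow> card S \<le> d"
  shows "indep_sum E V z = (\<Sum>k\<le>d. of_nat (card {S \<in> indep_sets E V. card S = k}) * z ^ k)"
proof -
  have "indep_sum E V z = (\<Sum>k\<le>d. \<Sum>S\<in>{S \<in> indep_sets E V. card S = k}. z ^ card S)"
    unfolding indep_sum_def using assms finite_indep_sets
    by (intro sum.group[symmetric]) auto
  also have "\<dots> = (\<Sum>k\<le>d. of_nat (card {S \<in> indep_sets E V. card S = k}) * z ^ k)"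
    by (intro sum.cong refl) simp
  finally show ?thesis .
qed

lemma poly_indep_poly: "poly (indep_poly n E) z = indep_sum E {..<n} z"
proof -
  have "card S \<le> n" if "S \<in> indep_sets E {..<n}" for S
    using that card_mono[of "{..<n}" S] by (auto simp: indep_sets_def)
  moreover have "independent_set n E = (\<lambda>S. S \<in> indep_sets E {..<n})"
    by (simp add: fun_eq_iff independent_set_def indep_sets_def)
  ultimately show ?thesis
    using indep_sum_by_card[of "{..<n}" E n z] by (simp add: indep_poly_def poly_sum poly_monom)
qed

text \<open>The extremal graph: triangles \<open>{3i, 3i+1, 3i+2}\<close> for \<open>i < m\<close>, a hub \<open>3m\<close> joined to
  \<open>3i+1\<close> and \<open>3i+2\<close>, and all further vertices isolated.\<close>
definition triangle_hub_graph :: "nat \<Rightarrow> nat \<Rightarrow> nat \<Rightarrow> bool" where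
  "triangle_hub_graph m x y \<longleftrightarrow>
     (x < 3 * m \<and> y < 3 * m \<and> x div 3 = y div 3 \<and> x \<noteq> y) \<or>
     (x = 3 * m \<and> y < 3 * m \<and> y mod 3 \<noteq> 0) \<or> (y = 3 * m \<and> x < 3 * m \<and> x mod 3 \<noteq> 0)"

lemma symp_triangle_hub_graph: "symp (triangle_hub_graph m)"
  by (auto simp: symp_def triangle_hub_graph_def)

lemma irreflp_triangle_hub_graph: "irreflp (triangle_hub_graph m)"
  by (auto simp: irreflp_def triangle_hub_graph_def)

lemma simple_graph_on_triangle_hub_graph: "3 * m < n \<Longrightarrow> simple_graph_on n (triangle_hub_graph m)"
  by (auto simp: simple_graph_on_def triangle_hub_graph_def)

lemma indep_sum_triangle_hub_graph_triangles:
  "indep_sum (triangle_hub_graph m) {..<3 * m} z = (1 + 3 * z) ^ m"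
proof -
  let ?E = "triangle_hub_graph m" and ?T = "\<lambda>i. {3 * i, 3 * i + 1, 3 * i + 2}"
  have T_div: "x div 3 = i" if "x \<in> ?T i" for x i :: nat
    using that by auto
  have triangle_edges: "?E (3 * i) (3 * i + 1)" "?E (3 * i) (3 * i + 2)" "?E (3 * i + 1) (3 * i + 2)"
    if "i < m" for i
    using that T_div[of "3 * i + 1" i] T_div[of "3 * i + 2" i] by (auto simp: triangle_hub_graph_def)
  have cover: "{..<3 * m} = (\<Union>i\<in>{..<m}. ?T i)"
  proof (intro equalityI subsetI)
    fix x assume "x \<in> {..<3 * m}"
    moreover have "x \<in> ?T (x div 3)"
      by simp presburger
    ultimately show "x \<in> (\<Union>i\<in>{..<m}. ?T i)"
      by auto
  qed auto
  have "indep_sum ?E {..<3 * m} z = (\<Prod>i<m. indep_sum ?E (?T i) z)"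
    unfolding cover
  proof (rule indep_sum_UN)
    show "disjoint_family_on ?T {..<m}"
      unfolding disjoint_family_on_def by (metis T_div disjoint_iff)
    show "\<not> ?E x y" if "i \<in> {..<m}" "j \<in> {..<m}" "i \<noteq> j" "x \<in> ?T i" "y \<in> ?T j" for i j x y
      using that T_div[OF that(4)] T_div[OF that(5)] by (auto simp: triangle_hub_graph_def)
  qed simp_all
  also have "\<dots> = (\<Prod>i<m. 1 + 3 * z)"
    by (intro prod.cong refl indep_sum_triangle irreflp_triangle_hub_graph triangle_edges) simp_all
  finally show ?thesis
    by simp
qed

lemma indep_sum_triangle_hub_graph_delete_hub:
  assumes "3 * m < n"
  shows "indep_sum (triangle_hub_graph m) ({..<n} - {3 * m}) z =
    (1 + 3 * z) ^ m * (1 + z) ^ (n - 3 * m - 1)"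
proof -
  let ?E = "triangle_hub_graph m" and ?W = "{3 * m<..<n}"
  have "{..<n} - {3 * m} = {..<3 * m} \<union> ?W"
    using assms by auto
  moreover have "indep_sum ?E ({..<3 * m} \<union> ?W) z = indep_sum ?E {..<3 * m} z * indep_sum ?E ?W z"
  proof (rule indep_sum_Un)
    show "\<forall>x\<in>{..<3 * m}. \<forall>y\<in>?W. \<not> ?E x y \<and> \<not> ?E y x"
      by (auto simp: triangle_hub_graph_def)
  qed auto
  moreover have "indep_sum ?E ?W z = (1 + z) ^ (n - 3 * m - 1)"
    by (subst indep_sum_edgeless) (auto simp: triangle_hub_graph_def)
  ultimately show ?thesis
    by (simp add: indep_sum_triangle_hub_graph_triangles)
qed

lemma indep_sum_triangle_hub_graph_delete_hub_nbhd:
  assumes "3 * m < n"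
  shows "indep_sum (triangle_hub_graph m) ({..<n} - closed_nbhd (triangle_hub_graph m) (3 * m)) z =
    (1 + z) ^ (m + (n - 3 * m - 1))"
proof -
  let ?E = "triangle_hub_graph m" and ?U = "(\<lambda>i. 3 * i) ` {..<m} \<union> {3 * m<..<n}"
  have "{..<n} - closed_nbhd ?E (3 * m) = ?U"
  proof (intro equalityI subsetI)
    fix x assume "x \<in> {..<n} - closed_nbhd ?E (3 * m)"
    then have "x < n" "x \<noteq> 3 * m" "x < 3 * m \<Longrightarrow> x = 3 * (x div 3)"
      by (auto simp: closed_nbhd_def triangle_hub_graph_def)
    then show "x \<in> ?U"
      by (metis (no_types, lifting) Un_iff greaterThanLessThan_iff image_eqI lessThan_iff
          linorder_neqE_nat mult_less_cancel1)
  qed (use assms in \<open>auto simp: closed_nbhd_def triangle_hub_graph_def\<close>)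
  moreover have "\<forall>x\<in>?U. \<forall>y\<in>?U. \<not> ?E x y"
    by (auto simp: triangle_hub_graph_def)
  moreover have "card ?U = m + (n - 3 * m - 1)"
    by (subst card_Un_disjoint) (auto simp: card_image inj_on_def)
  ultimately show ?thesis
    using indep_sum_edgeless[of ?U ?E z] by simp
qed

lemma indep_sum_triangle_hub_graph:
  assumes "3 * m < n"
  shows "indep_sum (triangle_hub_graph m) {..<n} z =
    (1 + z) ^ (n - 3 * m - 1) * ((1 + 3 * z) ^ m + z * (1 + z) ^ m)"
proof -
  have "indep_sum (triangle_hub_graph m) {..<n} z =
      indep_sum (triangle_hub_graph m) ({..<n} - {3 * m}) z +
      z * indep_sum (triangle_hub_graph m) ({..<n} - closed_nbhd (triangle_hub_graph m) (3 * m)) z"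
    using assms symp_triangle_hub_graph irreflp_triangle_hub_graph
    by (intro indep_sum_delete_vertex) (auto dest: irreflpD)
  then show ?thesis
    unfolding indep_sum_triangle_hub_graph_delete_hub[OF assms]
      indep_sum_triangle_hub_graph_delete_hub_nbhd[OF assms] power_add
    by (simp add: algebra_simps)
qed

lemma exists_root_ge_pow3:
  assumes "m \<ge> 1"
  shows "\<exists>t::real. 3 ^ m \<le> t \<and> (3 * t - 1) ^ m = t * (t - 1) ^ m"
proof -
  define h where "h = (\<lambda>t::real. (3 * t - 1) ^ m - t * (t - 1) ^ m)"
  define a :: real where "a = 3 ^ m"
  define b :: real where "b = 4 ^ m + 3"
  have "a \<ge> 3"
    unfolding a_def using assms power_increasing[of 1 m "3::real"] by simp
  have "a \<le> b"
    unfolding a_def b_def using power_mono[of "3::real" 4 m] by simp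
  have "a * (a - 1) ^ m = (3 * (a - 1)) ^ m"
    by (simp only: power_mult_distrib a_def)
  also have "\<dots> < (3 * a - 1) ^ m"
    using \<open>a \<ge> 3\<close> assms by (intro power_strict_mono) auto
  finally have "h a > 0"
    unfolding h_def by simp
  have "(3 * b - 1) ^ m \<le> (4 * (b - 1)) ^ m"
    unfolding b_def by (intro power_mono) auto
  also have "\<dots> = 4 ^ m * (b - 1) ^ m"
    by (rule power_mult_distrib)
  also have "\<dots> < b * (b - 1) ^ m"
    unfolding b_def by (intro mult_strict_right_mono zero_less_power) (auto intro: add_pos_pos)
  finally have "h b < 0"
    unfolding h_def by simp
  have "continuous_on {a..b} h"
    unfolding h_def by (intro continuous_intros)
  then obtain t where "a \<le> t" "t \<le> b" "h t = 0"
    using IVT2'[of h b 0 a] \<open>h a > 0\<close> \<open>h b < 0\<close> \<open>a \<le> b\<close> by auto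
  then show ?thesis
    unfolding h_def a_def by auto
qed

lemma triangle_hub_graph_large_root:
  assumes "3 * m < n" "m \<ge> 1"
  shows "\<exists>z. poly (indep_poly n (triangle_hub_graph m)) z = 0 \<and> 3 ^ m \<le> cmod z"
proof -
  obtain t :: real where t: "3 ^ m \<le> t" "(3 * t - 1) ^ m = t * (t - 1) ^ m"
    using exists_root_ge_pow3[OF assms(2)] by blast
  have "(1 + 3 * (-t)) ^ m + (-t) * (1 + (-t)) ^ m = (-1) ^ m * ((3 * t - 1) ^ m - t * (t - 1) ^ m)"
    by (simp add: power_mult_distrib[symmetric] algebra_simps)
  also have "\<dots> = 0"
    using t(2) by simp
  finally have "complex_of_real ((1 + 3 * (-t)) ^ m + (-t) * (1 + (-t)) ^ m) = 0"
    by simp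
  then have "(1 + 3 * complex_of_real (-t)) ^ m + complex_of_real (-t) * (1 + complex_of_real (-t)) ^ m = 0"
    by simp
  then have "poly (indep_poly n (triangle_hub_graph m)) (complex_of_real (-t)) = 0"
    unfolding poly_indep_poly indep_sum_triangle_hub_graph[OF assms(1)] by simp
  moreover have "3 ^ m \<le> cmod (complex_of_real (-t))"
    using t(1) by simp
  ultimately show ?thesis
    by blast
qed

definition maximal_indep_sets :: "('a \<Rightarrow> 'a \<Rightarrow> bool) \<Rightarrow> 'a set \<Rightarrow> 'a set set" where
  "maximal_indep_sets E V = {M \<in> indep_sets E V. \<forall>w\<in>V - M. \<exists>x\<in>M. E w x}"

lemma finite_maximal_indep_sets: "finite V \<Longrightarrow> finite (maximal_indep_sets E V)"
  by (rule finite_subset[of _ "indep_sets E V"]) (auto simp: maximal_indep_sets_def finite_indep_sets)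

lemma indep_set_subset_maximal:
  assumes "finite V" "symp E" "irreflp E" "S \<in> indep_sets E V"
  shows "\<exists>M\<in>maximal_indep_sets E V. S \<subseteq> M"
proof -
  obtain M where M: "M \<in> indep_sets E V" "S \<subseteq> M"
    and M_max: "\<And>M'. M' \<in> indep_sets E V \<Longrightarrow> M \<subseteq> M' \<Longrightarrow> M' = M"
    using finite_has_maximal2[OF finite_indep_sets[OF assms(1)] assms(4)] by blast
  have "\<exists>x\<in>M. E w x" if "w \<in> V - M" for w
  proof (rule ccontr)
    assume "\<not> (\<exists>x\<in>M. E w x)"
    then have "insert w M \<in> indep_sets E V"
      using M(1) that assms(2,3) by (auto simp: indep_sets_def dest: sympD irreflpD)
    then show False
      using M_max[of "insert w M"] that by auto
  qed
  then show ?thesis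
    using M by (auto simp: maximal_indep_sets_def)
qed

lemma cube_le_pow3: "n ^ 3 \<le> 3 ^ n" for n :: nat
proof (cases "n \<le> 3")
  case True
  then have "n = 0 \<or> n = 1 \<or> n = 2 \<or> n = 3"
    by auto
  then show ?thesis
    by auto
next
  case False
  then have "3 \<le> n"
    by simp
  then show ?thesis
  proof (induction n rule: dec_induct)
    case (step n)
    have "3 * (n * n) \<le> n * (n * n)" "3 * n \<le> n * n"
      using mult_le_mono1[OF step.hyps(1), of "n * n"] mult_le_mono1[OF step.hyps(1), of n] by simp_all
    moreover have "Suc n ^ 3 = n * (n * n) + 3 * (n * n) + 3 * n + 1" "n ^ 3 = n * (n * n)"
      by (simp_all add: power3_eq_cube algebra_simps)
    ultimately have "Suc n ^ 3 \<le> 3 * n ^ 3"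
      using step.hyps(1) by linarith
    also have "\<dots> \<le> 3 * 3 ^ n"
      using step.IH by simp
    finally show ?case
      by simp
  qed simp
qed

lemma maximal_indep_sets_cover:
  assumes "symp E" "v \<in> V"
  shows "maximal_indep_sets E V \<subseteq>
    (\<Union>u\<in>V \<inter> closed_nbhd E v. insert u ` maximal_indep_sets E (V - closed_nbhd E u))"
proof
  fix M assume M: "M \<in> maximal_indep_sets E V"
  then have MV: "M \<subseteq> V" and M_indep: "\<forall>x\<in>M. \<forall>y\<in>M. \<not> E x y"
    and M_dom: "\<forall>w\<in>V - M. \<exists>x\<in>M. E w x"
    by (auto simp: maximal_indep_sets_def indep_sets_def)
  obtain u where u: "u \<in> M" "u \<in> closed_nbhd E v"
    using M_dom assms by (cases "v \<in> M") (auto simp: closed_nbhd_def dest: sympD)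
  have "M - {u} \<in> maximal_indep_sets E (V - closed_nbhd E u)"
    using MV M_indep u(1) unfolding maximal_indep_sets_def indep_sets_def closed_nbhd_def
  proof (intro CollectI conjI ballI)
    fix w assume "w \<in> V - insert u {w. E u w} - (M - {u})"
    then obtain x where "x \<in> M" "E w x" "\<not> E u w"
      using M_dom by auto
    then show "\<exists>x\<in>M - {u}. E w x"
      using assms(1) by (metis Diff_iff singletonD sympD)
  qed auto
  moreover have "M = insert u (M - {u})"
    using u(1) by auto
  ultimately show "M \<in> (\<Union>u\<in>V \<inter> closed_nbhd E v. insert u ` maximal_indep_sets E (V - closed_nbhd E u))"
    using u MV by blast
qed

lemma card_maximal_indep_sets_le_branch:
  assumes "finite V" "symp E" "v \<in> V"
  shows "\<exists>u\<in>V \<inter> closed_nbhd E v. card (maximal_indep_sets E V) \<le>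
    card (V \<inter> closed_nbhd E v) * card (maximal_indep_sets E (V - closed_nbhd E u))"
proof -
  define N where "N = V \<inter> closed_nbhd E v"
  define c where "c u = card (maximal_indep_sets E (V - closed_nbhd E u))" for u
  have "finite N" "v \<in> N"
    using assms by (auto simp: N_def closed_nbhd_def)
  then have "Max (c ` N) \<in> c ` N"
    by (intro Max_in) auto
  then obtain u where "u \<in> N" and u_Max: "c u = Max (c ` N)"
    by (metis imageE)
  then have u_max: "c w \<le> c u" if "w \<in> N" for w
    using that \<open>finite N\<close> by simp
  have "card (maximal_indep_sets E V) \<le> (\<Sum>w\<in>N. card (insert w ` maximal_indep_sets E (V - closed_nbhd E w)))"
    using maximal_indep_sets_cover[OF assms(2,3)] \<open>finite N\<close> assms(1) unfolding N_def
    by (intro order_trans[OF card_mono card_UN_le]) (auto simp: finite_maximal_indep_sets)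
  also have "\<dots> \<le> (\<Sum>w\<in>N. c w)"
    unfolding c_def using assms(1) by (intro sum_mono card_image_le finite_maximal_indep_sets) auto
  also have "\<dots> \<le> card N * c u"
    using sum_bounded_above[of N c "c u"] u_max by simp
  finally show ?thesis
    using \<open>u \<in> N\<close> unfolding N_def c_def by blast
qed

text \<open>Moon--Moser: every maximal independent set meets a smallest closed neighbourhood, of size
  \<open>s\<close> say; this gives at most \<open>s\<close> subproblems on at most \<open>card V - s\<close> vertices each, and
  \<open>s\<^sup>3 \<le> 3\<^sup>s\<close>.\<close>
lemma card_maximal_indep_sets_cube_le:
  assumes "finite V" "symp E"
  shows "card (maximal_indep_sets E V) ^ 3 \<le> 3 ^ card V"
  using assms(1)
proof (induction V rule: finite_psubset_induct)
  case (psubset V)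
  show ?case
  proof (cases "V = {}")
    case True
    then have "maximal_indep_sets E V = {{}}"
      by (auto simp: maximal_indep_sets_def indep_sets_def)
    then show ?thesis
      using True by simp
  next
    case False
    define N where "N u = V \<inter> closed_nbhd E u" for u
    obtain v where "v \<in> V" and v_min: "\<And>u. u \<in> V \<Longrightarrow> card (N v) \<le> card (N u)"
      using False ex_has_least_nat[of "\<lambda>u. u \<in> V" _ "\<lambda>u. card (N u)"] by blast
    define s where "s = card (N v)"
    obtain u where "u \<in> N v"
      and branch: "card (maximal_indep_sets E V) \<le> s * card (maximal_indep_sets E (V - closed_nbhd E u))"
      using card_maximal_indep_sets_le_branch[OF psubset.hyps assms(2) \<open>v \<in> V\<close>]
      unfolding N_def s_def by blast
    then have "u \<in> V" "u \<in> closed_nbhd E u"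
      by (auto simp: N_def closed_nbhd_def)
    then have "card (maximal_indep_sets E (V - closed_nbhd E u)) ^ 3 \<le> 3 ^ card (V - closed_nbhd E u)"
      by (intro psubset.IH) auto
    also have "card (V - closed_nbhd E u) = card V - card (N u)"
      using psubset.hyps by (simp add: N_def card_Diff_subset_Int)
    also have "\<dots> \<le> card V - s"
      using v_min \<open>u \<in> V\<close> by (simp add: s_def diff_le_mono2)
    finally have IH: "card (maximal_indep_sets E (V - closed_nbhd E u)) ^ 3 \<le> 3 ^ (card V - s)"
      by (simp add: power_increasing)
    have "card (maximal_indep_sets E V) ^ 3 \<le> s ^ 3 * card (maximal_indep_sets E (V - closed_nbhd E u)) ^ 3"
      using power_mono[OF branch, of 3] by (simp add: power_mult_distrib)
    also have "\<dots> \<le> 3 ^ s * 3 ^ (card V - s)"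
      using cube_le_pow3 IH by (rule mult_le_mono)
    also have "\<dots> = 3 ^ card V"
      using card_mono[OF psubset.hyps, of "N v"] by (simp add: N_def s_def flip: power_add)
    finally show ?thesis .
  qed
qed

lemma card_indep_sets_of_card_le:
  assumes "finite V" "symp E" "irreflp E" "\<And>S. S \<in> indep_sets E V \<Longrightarrow> card S \<le> d"
  shows "card {S \<in> indep_sets E V. card S = j} \<le> card (maximal_indep_sets E V) * (d choose j)"
proof -
  let ?K = "maximal_indep_sets E V"
  have fin_M: "finite M" if "M \<in> ?K" for M
    using that assms(1) by (auto simp: maximal_indep_sets_def indep_sets_def intro: finite_subset)
  have "{S \<in> indep_sets E V. card S = j} \<subseteq> (\<Union>M\<in>?K. {S. S \<subseteq> M \<and> card S = j})"
    using indep_set_subset_maximal[OF assms(1-3)] by blast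
  then have "card {S \<in> indep_sets E V. card S = j} \<le> (\<Sum>M\<in>?K. card {S. S \<subseteq> M \<and> card S = j})"
    using fin_M finite_maximal_indep_sets[OF assms(1)]
    by (intro order_trans[OF card_mono card_UN_le]) auto
  also have "\<dots> \<le> (\<Sum>M\<in>?K. d choose j)"
  proof (rule sum_mono)
    fix M assume "M \<in> ?K"
    then have "card M \<le> d"
      using assms(4) by (simp add: maximal_indep_sets_def)
    then show "card {S. S \<subseteq> M \<and> card S = j} \<le> d choose j"
      using n_subsets[OF fin_M[OF \<open>M \<in> ?K\<close>]] binomial_right_mono by simp
  qed
  finally show ?thesis
    by simp
qed

lemma sum_half_powers_less:
  fixes R :: real
  assumes "R > 0"
  shows "(\<Sum>j<d. (R / 2) ^ (d - j) * R ^ j) < R ^ d"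
proof (induction d)
  case (Suc d)
  have "(\<Sum>j<Suc d. (R / 2) ^ (Suc d - j) * R ^ j) = R / 2 * (\<Sum>j<d. (R / 2) ^ (d - j) * R ^ j) + R / 2 * R ^ d"
    by (simp add: sum_distrib_left Suc_diff_le mult.assoc)
  also have "\<dots> < R / 2 * R ^ d + R / 2 * R ^ d"
    using Suc.IH assms by (intro add_strict_right_mono mult_strict_left_mono) auto
  finally show ?case
    by simp
qed simp

lemma norm_root_le_twice_coeff_ratio:
  fixes a :: "nat \<Rightarrow> 'a::real_normed_field"
  assumes root: "(\<Sum>j\<le>d. a j * z ^ j) = 0" and lead: "1 \<le> norm (a d)"
    and coeffs: "\<And>j. j < d \<Longrightarrow> norm (a j) \<le> B ^ (d - j)" and "0 \<le> B"
  shows "norm z \<le> 2 * B"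
proof (rule ccontr)
  assume "\<not> norm z \<le> 2 * B"
  then have R: "2 * B < norm z" "0 < norm z"
    using \<open>0 \<le> B\<close> by auto
  have "a d * z ^ d = - (\<Sum>j<d. a j * z ^ j)"
    using root by (simp add: lessThan_Suc_atMost[symmetric] eq_neg_iff_add_eq_0 add.commute)
  then have "norm (a d) * norm z ^ d = norm (\<Sum>j<d. a j * z ^ j)"
    by (metis norm_minus_cancel norm_mult norm_power)
  then have "norm z ^ d \<le> norm (\<Sum>j<d. a j * z ^ j)"
    using mult_right_mono[OF lead, of "norm z ^ d"] by simp
  also have "\<dots> \<le> (\<Sum>j<d. B ^ (d - j) * norm z ^ j)"
    using coeffs by (intro order_trans[OF norm_sum] sum_mono)
      (simp add: norm_mult norm_power mult_right_mono)
  also have "\<dots> \<le> (\<Sum>j<d. (norm z / 2) ^ (d - j) * norm z ^ j)"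
    using R \<open>0 \<le> B\<close> by (intro sum_mono mult_right_mono power_mono) auto
  also have "\<dots> < norm z ^ d"
    using R(2) by (rule sum_half_powers_less)
  finally show False
    by simp
qed

lemma norm_indep_root_le:
  fixes z :: "'b::real_normed_field"
  assumes "finite V" "symp E" "irreflp E" "indep_sum E V z = 0"
  shows "norm z \<le> 2 * real (card (maximal_indep_sets E V)) * real (card V)"
proof -
  let ?I = "indep_sets E V" and ?K = "card (maximal_indep_sets E V)"
  let ?i = "\<lambda>j. card {S \<in> ?I. card S = j}"
  define d where "d = Max (card ` ?I)"
  have "{} \<in> ?I" and fin_I: "finite ?I"
    using assms(1) by (auto simp: indep_sets_def finite_indep_sets)
  then have d_max: "card S \<le> d" if "S \<in> ?I" for S
    using that by (simp add: d_def)
  have "d \<in> card ` ?I"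
    unfolding d_def using fin_I \<open>{} \<in> ?I\<close> by (intro Max_in) auto
  then obtain S0 where "S0 \<in> ?I" "card S0 = d"
    by blast
  then have "?i d \<ge> 1" and "d \<le> card V"
    using fin_I assms(1) by (auto simp: Suc_le_eq card_gt_0_iff indep_sets_def intro!: card_mono)
  have "?K \<ge> 1"
    using indep_set_subset_maximal[OF assms(1-3) \<open>{} \<in> ?I\<close>] finite_maximal_indep_sets[OF assms(1)]
    by (auto simp: Suc_le_eq card_gt_0_iff)
  have "?i j \<le> (?K * d) ^ (d - j)" if "j < d" for j
  proof -
    have "?i j \<le> ?K * (d choose (d - j))"
      using card_indep_sets_of_card_le[OF assms(1-3) d_max] that
      by (metis binomial_symmetric less_imp_le)
    also have "\<dots> \<le> ?K ^ (d - j) * d ^ (d - j)"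
      using \<open>?K \<ge> 1\<close> that by (intro mult_le_mono self_le_power binomial_le_pow) auto
    finally show ?thesis
      by (simp add: power_mult_distrib)
  qed
  moreover have "(\<Sum>j\<le>d. of_nat (?i j) * z ^ j) = 0"
    using assms(4) indep_sum_by_card[of V E d z] assms(1) d_max by simp
  ultimately have "norm z \<le> 2 * real (?K * d)"
    using \<open>?i d \<ge> 1\<close>
    by (intro norm_root_le_twice_coeff_ratio[where a = "\<lambda>j. of_nat (?i j)"])
      (simp_all del: of_nat_mult flip: of_nat_power)
  also have "\<dots> \<le> 2 * real ?K * real (card V)"
    using \<open>d \<le> card V\<close> by (simp add: mult_left_mono)
  finally show ?thesis .
qed

lemma indep_root_modulus_le:
  assumes "simple_graph_on n E" "poly (indep_poly n E) z = 0"
  shows "cmod z \<le> 2 * real n * 3 powr (real n / 3)"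
proof -
  let ?K = "card (maximal_indep_sets E {..<n})"
  have E: "symp E" "irreflp E"
    using assms(1) by (auto simp: simple_graph_on_def symp_def irreflp_def)
  have "?K ^ 3 \<le> 3 ^ n"
    using card_maximal_indep_sets_cube_le[OF _ E(1), of "{..<n}"] by simp
  then have "real ?K ^ 3 \<le> (3 powr (real n / 3)) ^ 3"
    using of_nat_mono[OF \<open>?K ^ 3 \<le> 3 ^ n\<close>] by (simp add: powr_power powr_realpow)
  then have "?K \<le> 3 powr (real n / 3)"
    using power_le_imp_le_base[of "real ?K" 2 "3 powr (real n / 3)"] by simp
  have "cmod z \<le> 2 * real ?K * real n"
    using norm_indep_root_le[OF _ E, of "{..<n}" z] assms(2) by (simp add: poly_indep_poly)
  also have "\<dots> = (2 * real n) * real ?K"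
    by simp
  also have "\<dots> \<le> (2 * real n) * 3 powr (real n / 3)"
    using \<open>?K \<le> 3 powr (real n / 3)\<close> by (rule mult_left_mono) simp
  finally show ?thesis .
qed

lemma finite_simple_graphs_on: "finite {E. simple_graph_on n E}"
proof (rule finite_subset)
  show "{E. simple_graph_on n E} \<subseteq> (\<lambda>R x y. (x, y) \<in> R) ` Pow ({..<n} \<times> {..<n})"
  proof
    fix E assume "E \<in> {E. simple_graph_on n E}"
    then have "{(x, y). E x y} \<in> Pow ({..<n} \<times> {..<n})"
      by (auto simp: simple_graph_on_def)
    then show "E \<in> (\<lambda>R x y. (x, y) \<in> R) ` Pow ({..<n} \<times> {..<n})"
      by (intro image_eqI[of _ _ "{(x, y). E x y}"]) simp_all
  qed
qed simp

lemma poly_indep_poly_0: "poly (indep_poly n E) 0 = 1"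
proof -
  have "S = {}" if "S \<subseteq> {..<n}" "card S = 0" for S :: "nat set"
    using that finite_subset[OF that(1)] by simp
  then have "{S. independent_set n E S \<and> card S = 0} = {{}}"
    by (auto simp: independent_set_def)
  then show ?thesis
    by (simp add: poly_0_coeff_0 indep_poly_def coeff_sum)
qed

lemma finite_indep_root_moduli:
  "finite {cmod z |z E. simple_graph_on n E \<and> poly (indep_poly n E) z = 0}"
proof (rule finite_subset)
  have "indep_poly n E \<noteq> 0" for E
    using poly_indep_poly_0[of n E] by auto
  then show "finite (\<Union>E\<in>{E. simple_graph_on n E}. cmod ` {z. poly (indep_poly n E) z = 0})"
    using finite_simple_graphs_on by (intro finite_UN_I finite_imageI poly_roots_finite)
qed blast

lemma max_indep_root_modulus_bounds:
  assumes "n \<ge> 4"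
  shows "3 powr ((real n - 3) / 3) \<le> max_indep_root_modulus n"
    and "max_indep_root_modulus n \<le> 2 * real n * 3 powr (real n / 3)"
proof -
  define m where "m = (n - 1) div 3"
  have "3 * m < n" "m \<ge> 1" "n \<le> 3 * m + 3"
    using assms unfolding m_def by presburger+
  then have "(real n - 3) / 3 \<le> m"
    by (simp add: field_simps)
  obtain z where z: "poly (indep_poly n (triangle_hub_graph m)) z = 0" "3 ^ m \<le> cmod z"
    using triangle_hub_graph_large_root[OF \<open>3 * m < n\<close> \<open>m \<ge> 1\<close>] by blast
  let ?R = "{cmod z |z E. simple_graph_on n E \<and> poly (indep_poly n E) z = 0}"
  have "cmod z \<in> ?R"
    using z(1) simple_graph_on_triangle_hub_graph[OF \<open>3 * m < n\<close>] by blast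
  have "3 powr ((real n - 3) / 3) \<le> 3 powr m"
    using \<open>(real n - 3) / 3 \<le> m\<close> by (intro powr_mono) auto
  also have "\<dots> \<le> cmod z"
    using z(2) by (simp add: powr_realpow)
  also have "\<dots> \<le> max_indep_root_modulus n"
    unfolding max_indep_root_modulus_def using finite_indep_root_moduli \<open>cmod z \<in> ?R\<close> by (rule Max_ge)
  finally show "3 powr ((real n - 3) / 3) \<le> max_indep_root_modulus n" .
  show "max_indep_root_modulus n \<le> 2 * real n * 3 powr (real n / 3)"
    unfolding max_indep_root_modulus_def using finite_indep_root_moduli \<open>cmod z \<in> ?R\<close>
    by (intro Max.boundedI) (auto intro: indep_root_modulus_le)
qed

lemma log_max_indep_root_modulus_bounds:
  assumes "n \<ge> 4"
  shows "(real n - 3) / 3 \<le> log 3 (max_indep_root_modulus n)"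
    and "log 3 (max_indep_root_modulus n) \<le> log 3 (2 * real n) + real n / 3"
proof -
  note bounds = max_indep_root_modulus_bounds[OF assms]
  have pos: "0 < max_indep_root_modulus n"
    by (rule less_le_trans[OF _ bounds(1)]) simp
  then show "(real n - 3) / 3 \<le> log 3 (max_indep_root_modulus n)"
    using bounds(1) by (subst le_log_iff) auto
  have "log 3 (max_indep_root_modulus n) \<le> log 3 (2 * real n * 3 powr (real n / 3))"
    using bounds(2) pos by simp
  also have "\<dots> = log 3 (2 * real n) + real n / 3"
    using assms by (simp add: log_mult)
  finally show "log 3 (max_indep_root_modulus n) \<le> log 3 (2 * real n) + real n / 3" .
qed

theorem corollary1:
  shows "((\<lambda>n. log 3 (max_indep_root_modulus n) / real n) \<longlongrightarrow> 1/3) sequentially"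
proof (rule tendsto_sandwich)
  show "((\<lambda>n. (real n - 3) / 3 / real n) \<longlongrightarrow> 1/3) sequentially"
    by real_asymp
  show "((\<lambda>n. (log 3 (2 * real n) + real n / 3) / real n) \<longlongrightarrow> 1/3) sequentially"
    by real_asymp
  show "eventually (\<lambda>n. (real n - 3) / 3 / real n \<le> log 3 (max_indep_root_modulus n) / real n)
      sequentially"
    using eventually_ge_at_top[of 4]
    by (rule eventually_mono) (intro divide_right_mono log_max_indep_root_modulus_bounds(1), auto)
  show "eventually (\<lambda>n. log 3 (max_indep_root_modulus n) / real n \<le>
      (log 3 (2 * real n) + real n / 3) / real n) sequentially"
    using eventually_ge_at_top[of 4]
    by (rule eventually_mono) (intro divide_right_mono log_max_indep_root_modulus_bounds(2), auto)
qed

end
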